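(* Let $\kappa\in(0,1)$ and define, for $\varepsilon\in(0,1)$, $$f_\kappa(\varepsilon)=\bigl(1-\kappa\, Q^{-1}(\varepsilon)\bigr)(1-\varepsilon).$$ Then $f_\kappa$ has a unique maximizer $\varepsilon_g^{\star}=\varepsilon_g^\star(\kappa)\in(0,1)$, and $\varepsilon_g^{\star}$ is the unique solution in $(0,1)$ of the fixed point equation $$\Bigl(Q^{-1}(\varepsilon)-(1-\varepsilon)\,\bigl(Q^{-1}\bigr)'(\varepsilon)\Bigr)^{-1}=\kappa,\qquad\text{i.e.}\qquad \Bigl(Q^{-1}(\varepsilon)+(1-\varepsilon)\sqrt{2\pi}\,e^{(Q^{-1}(\varepsilon))^2/2}\Bigr)^{-1}=\kappa .$$ Furthermore, $\varepsilon_g^{\star}(\kappa)$ is increasing in $\kappa$.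
   Context: $Q(x)=\int_x^\infty \frac{1}{\sqrt{2\pi}}e^{-t^2/2}\,dt$ is the tail probability of a standard normal random variable, and $Q^{-1}:(0,1)\to\mathbb{R}$ is its inverse function. In the paper's setting, $f_\kappa$ is (up to the positive factor $\mu$) a Gaussian approximation of the goodput $R_\varepsilon(1-\varepsilon)$ as a function of the packet error probability $\varepsilon$, where $\kappa=\sigma(\mathsf{SNR})/(\mu(\mathsf{SNR})\sqrt{L})$ with $\mu,\sigma^2$ the mean and variance of $\log_2(1+\mathsf{SNR}|h|^2)$, $h\sim\mathcal{CN}(0,1)$, and $L$ the number of independent fading blocks per codeword. *)

theory Defs
  imports "HOL-Analysis.Analysis"
begin

definition Qfun :: "real \<Rightarrow> real" where
  "Qfun x = (LBINT t:{x..}. (1 / sqrt (2 * pi)) * exp (- (t\<^sup>2) / 2))"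

definition Qinv :: "real \<Rightarrow> real" where
  "Qinv e = (THE x. Qfun x = e)"

definition f_kappa :: "real \<Rightarrow> real \<Rightarrow> real" where
  "f_kappa \<kappa> e = (1 - \<kappa> * Qinv e) * (1 - e)"

definition is_maximizer :: "real \<Rightarrow> real \<Rightarrow> bool" where
  "is_maximizer \<kappa> e \<longleftrightarrow> e \<in> {0<..<1} \<and> (\<forall>e'\<in>{0<..<1}. f_kappa \<kappa> e' \<le> f_kappa \<kappa> e)"

definition eps_g :: "real \<Rightarrow> real" where
  "eps_g \<kappa> = (THE e. is_maximizer \<kappa> e)"

end

theory Submission imports Defs "HOL-Probability.Probability" "HOL-Real_Asymp.Real_Asymp"
begin

(* Write phi for the standard normal density, so that Q' = -phi and Q is a
   strictly decreasing bijection from the reals onto (0,1).  Substituting e = Q(x), the goodput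
   f_kappa(e) becomes g_k(x) = (1 - k x)(1 - Q x), and a direct computation gives
        g_k'(x) = k phi(x) (1/k - h(x)),    h(x) = x + (1 - Q x) / phi(x).
   The Mills-type bound 1 - Q(x) <= phi(x)/(-x) for x < 0 shows h' = 2 + x (1 - Q x)/phi(x) > 0,
   so h is a strictly increasing bijection of the reals.  Hence g_k increases up to the unique
   point x*(k) with h(x*(k)) = 1/k and decreases afterwards: the unique maximiser of f_kappa is
   e* = Q(x*(k)).  Since (Q^-1)'(e) = -1/phi(Q^-1 e), both fixed-point expressions in the
   theorem equal h(Q^-1 e), which gives the characterisation; finally k -> 1/k is decreasing,
   x* = h^-1(1/k) is decreasing and Q is decreasing, so e* is increasing in k. *)

abbreviation phi :: "real \<Rightarrow> real" where "phi \<equiv> std_normal_density"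

lemma phi_pos: "phi x > 0"
  by (rule normal_density_pos) simp

lemma phi_continuous_on: "continuous_on S phi"
  unfolding std_normal_density_def by (intro continuous_intros) auto

lemma phi_deriv: "DERIV phi x :> - x * phi x"
proof -
  have "DERIV (\<lambda>x. (1 / sqrt (2 * pi)) * exp (- x\<^sup>2 / 2)) x
          :> (1 / sqrt (2 * pi)) * (exp (- x\<^sup>2 / 2) * (- (2 * x) / 2))"
    by (intro derivative_eq_intros) auto
  then show ?thesis unfolding std_normal_density_def by (simp add: algebra_simps)
qed

lemma inverse_phi: "1 / phi x = sqrt (2 * pi) * exp (x\<^sup>2 / 2)"
proof -
  have "exp (- x\<^sup>2 / 2) * exp (x\<^sup>2 / 2) = 1"
    by (simp add: exp_add[symmetric])
  then show ?thesis unfolding std_normal_density_def by (simp add: field_simps)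
qed

section \<open>The Gaussian tail function Q\<close>

lemma Qfun_set_integral: "Qfun x = (LINT t:{x..}|lborel. phi t)"
  unfolding Qfun_def std_normal_density_def ..

lemma phi_set_integrable: "A \<in> sets borel \<Longrightarrow> set_integrable lborel A phi"
  unfolding set_integrable_def by (rule integrable_mult_indicator) auto

text \<open>Additivity of the tail integral; it turns Q into a Riemann-type integral locally.\<close>
lemma Qfun_split: assumes "a \<le> b" shows "Qfun a = integral {a..b} phi + Qfun b"
proof -
  have split: "{a..} = {a..b} \<union> {b<..}" using assms by auto
  have "Qfun a = (LINT t:{a..b}|lborel. phi t) + (LINT t:{b<..}|lborel. phi t)"
    unfolding Qfun_set_integral split by (rule set_integral_Un) (auto intro: phi_set_integrable)
  moreover have "(LINT t:{a..b}|lborel. phi t) = integral {a..b} phi"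
    by (rule set_borel_integral_eq_integral) (auto intro: phi_set_integrable)
  moreover have "(LINT t:{b<..}|lborel. phi t) = Qfun b"
    unfolding Qfun_set_integral
    apply (rule set_integral_cong_set)
    using phi_set_integrable[of "{b..}"] phi_set_integrable[of "{b<..}"]
      apply (auto simp: set_integrable_def set_borel_measurable_def)
    using AE_lborel_singleton[of b] by eventually_elim auto
  ultimately show ?thesis by simp
qed

lemma Qfun_deriv: "DERIV Qfun x :> - phi x"
proof -
  have integral_deriv:
    "((\<lambda>y. integral {x-1..y} phi) has_real_derivative phi x) (at x within {x-1..x+1})"
    by (rule integral_has_real_derivative[OF phi_continuous_on]) auto
  have "((\<lambda>y. Qfun (x-1) - integral {x-1..y} phi) has_real_derivative - phi x)
               (at x within {x-1..x+1})"
    using DERIV_diff[OF DERIV_const integral_deriv, of "Qfun (x-1)"] by simp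
  moreover have "x \<in> interior {x-1..x+1}" by simp
  ultimately have "((\<lambda>y. Qfun (x-1) - integral {x-1..y} phi) has_real_derivative - phi x) (at x)"
    using at_within_interior by metis
  then show ?thesis
  proof (rule has_field_derivative_transform_within_open[of _ _ _ "{x-1<..}"])
    fix y :: real assume "y \<in> {x-1<..}"
    then show "Qfun (x-1) - integral {x-1..y} phi = Qfun y" using Qfun_split[of "x-1" y] by auto
  qed auto
qed

lemma Qfun_isCont: "isCont Qfun x"
  using Qfun_deriv DERIV_isCont by blast

lemma Qfun_at_top: "(Qfun \<longlongrightarrow> 0) at_top"
proof -
  have "((\<lambda>x. integral\<^sup>L lborel (\<lambda>t. indicator {x..} t *\<^sub>R phi t))
          \<longlongrightarrow> integral\<^sup>L lborel (\<lambda>t::real. 0::real)) at_top"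
  proof (rule integral_dominated_convergence_at_top[where w=phi])
    show "AE t in lborel. ((\<lambda>x. indicator {x..} t *\<^sub>R phi t) \<longlongrightarrow> 0) at_top"
    proof (rule AE_I2, rule tendsto_eventually)
      fix t :: real
      show "\<forall>\<^sub>F x in at_top. indicator {x..} t *\<^sub>R phi t = 0"
        using eventually_gt_at_top[of t] by eventually_elim auto
    qed
    show "\<forall>\<^sub>F i in at_top. AE x in lborel. norm (indicator {i..} x *\<^sub>R phi x) \<le> phi x"
      by (auto simp: indicator_def)
  qed auto
  then show ?thesis unfolding Qfun_set_integral set_lebesgue_integral_def by simp
qed

lemma Qfun_at_bot: "(Qfun \<longlongrightarrow> 1) at_bot"
proof -
  have "((\<lambda>x. integral\<^sup>L lborel (\<lambda>t. indicator {-x..} t *\<^sub>R phi t)) \<longlongrightarrow> integral\<^sup>L lborel phi) at_top"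
  proof (rule integral_dominated_convergence_at_top[where w=phi])
    show "AE t in lborel. ((\<lambda>x. indicator {-x..} t *\<^sub>R phi t) \<longlongrightarrow> phi t) at_top"
    proof (rule AE_I2, rule tendsto_eventually)
      fix t :: real
      show "\<forall>\<^sub>F x in at_top. indicator {-x..} t *\<^sub>R phi t = phi t"
        using eventually_gt_at_top[of "-t"] by eventually_elim auto
    qed
    show "\<forall>\<^sub>F i in at_top. AE x in lborel. norm (indicator {-i..} x *\<^sub>R phi x) \<le> phi x"
      by (auto simp: indicator_def)
  qed auto
  then have "((\<lambda>x. Qfun (-x)) \<longlongrightarrow> 1) at_top"
    unfolding Qfun_set_integral set_lebesgue_integral_def by simp
  then show ?thesis unfolding filterlim_at_bot_mirror by simp
qed

lemma Qfun_strict_decreasing: "a < b \<Longrightarrow> Qfun b < Qfun a"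
  by (rule DERIV_neg_imp_decreasing[of a b Qfun])
     (use Qfun_deriv phi_pos in \<open>auto intro!: exI[of _ "- phi _"]\<close>)

lemma Qfun_antimono: "a \<le> b \<Longrightarrow> Qfun b \<le> Qfun a"
  using Qfun_strict_decreasing[of a b] by (cases "a = b") auto

lemma Qfun_inj: "Qfun x = Qfun y \<Longrightarrow> x = y"
  using Qfun_strict_decreasing[of x y] Qfun_strict_decreasing[of y x]
  by (cases x y rule: linorder_cases) auto

text \<open>Q takes values strictly inside (0,1): it is strictly decreasing between the limits 1 and 0.\<close>
lemma Qfun_bounds: "0 < Qfun x" "Qfun x < 1"
proof -
  have "Qfun (x+1) \<ge> 0"
  proof (rule tendsto_le[OF _ tendsto_const Qfun_at_top])
    show "\<forall>\<^sub>F y in at_top. Qfun y \<le> Qfun (x+1)"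
      using eventually_ge_at_top[of "x+1"] by eventually_elim (rule Qfun_antimono)
  qed simp
  then show "0 < Qfun x" using Qfun_strict_decreasing[of x "x+1"] by simp
  have "Qfun (x-1) \<le> 1"
  proof (rule tendsto_le[OF _ Qfun_at_bot tendsto_const])
    show "\<forall>\<^sub>F y in at_bot. Qfun (x-1) \<le> Qfun y"
      using eventually_le_at_bot[of "x-1"] by eventually_elim (rule Qfun_antimono)
  qed simp
  then show "Qfun x < 1" using Qfun_strict_decreasing[of "x-1" x] by simp
qed

lemma Qfun_surj: assumes "0 < e" "e < 1" shows "\<exists>x. Qfun x = e"
proof -
  obtain b where b: "\<And>x. x \<ge> b \<Longrightarrow> Qfun x < e"
    using order_tendstoD(2)[OF Qfun_at_top assms(1)] by (auto simp: eventually_at_top_linorder)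
  obtain a where a: "\<And>x. x \<le> a \<Longrightarrow> e < Qfun x"
    using order_tendstoD(1)[OF Qfun_at_bot assms(2)] by (auto simp: eventually_at_bot_linorder)
  have "\<exists>x\<ge>min a (b - 1). x \<le> b \<and> Qfun x = e"
    by (rule IVT2) (use a b Qfun_isCont in \<open>auto intro: less_imp_le\<close>)
  then show ?thesis by blast
qed

lemma Qinv_Qfun [simp]: "Qinv (Qfun x) = x"
  unfolding Qinv_def by (rule the_equality) (auto intro: Qfun_inj)

lemma Qfun_Qinv: assumes "0 < e" "e < 1" shows "Qfun (Qinv e) = e"
  using Qfun_surj[OF assms] by auto

lemma deriv_Qinv: assumes "0 < e" "e < 1" shows "deriv Qinv e = - 1 / phi (Qinv e)"
proof -
  have cont: "isCont Qinv (Qfun (Qinv e))"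
    by (rule isCont_inverse_function2[of "Qinv e - 1" _ "Qinv e + 1"]) (auto intro: Qfun_isCont)
  have "DERIV Qinv e :> inverse (- phi (Qinv e))"
    by (rule DERIV_inverse_function[where f=Qfun and a=0 and b=1])
       (use assms Qfun_deriv phi_pos[of "Qinv e"] cont Qfun_Qinv in auto)
  then show ?thesis by (simp add: DERIV_imp_deriv divide_inverse)
qed

section \<open>A Mills-ratio bound on the left half-line\<close>

text \<open>The gap in the Mills inequality 1 - Q(x) <= phi(x)/(-x); it is increasing for x < 0 and
  vanishes at minus infinity, hence is non-negative.\<close>
definition mills_gap :: "real \<Rightarrow> real" where
  "mills_gap x = phi x / (- x) - (1 - Qfun x)"

lemma mills_gap_deriv: assumes "x < 0" shows "DERIV mills_gap x :> phi x / x\<^sup>2"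
proof -
  let ?d = "((- x * phi x) * (- x) - phi x * (- 1)) / ((- x) * (- x)) - (0 - (- phi x))"
  have "DERIV mills_gap x :> ?d"
    unfolding mills_gap_def[abs_def]
    by (rule DERIV_diff[OF DERIV_divide[OF phi_deriv DERIV_minus[OF DERIV_ident]]
                           DERIV_diff[OF DERIV_const Qfun_deriv]]) (use assms in simp)
  moreover have "?d = phi x / x\<^sup>2" using assms by (simp add: field_simps power2_eq_square)
  ultimately show ?thesis by simp
qed

lemma mills_gap_at_bot: "(mills_gap \<longlongrightarrow> 0) at_bot"
proof -
  have density_term: "((\<lambda>x. phi x / (- x)) \<longlongrightarrow> 0) at_bot"
    unfolding std_normal_density_def by real_asymp
  have cdf_term: "((\<lambda>x. 1 - Qfun x) \<longlongrightarrow> 0) at_bot"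
    using tendsto_diff[OF tendsto_const Qfun_at_bot, of 1] by simp
  show ?thesis unfolding mills_gap_def[abs_def] using tendsto_diff[OF density_term cdf_term] by simp
qed

lemma mills_gap_nonneg: assumes "x < 0" shows "0 \<le> mills_gap x"
proof (rule tendsto_le[OF _ tendsto_const mills_gap_at_bot])
  have increasing: "mills_gap y \<le> mills_gap x" if "y < x" for y
  proof (rule less_imp_le, rule DERIV_pos_imp_increasing_open[OF that])
    fix z assume "y < z" "z < x"
    then show "\<exists>d. DERIV mills_gap z :> d \<and> 0 < d"
      using assms mills_gap_deriv[of z] phi_pos[of z] by (intro exI[of _ "phi z / z\<^sup>2"]) auto
  next
    have "\<forall>z\<in>{y..x}. isCont mills_gap z"
      using assms mills_gap_deriv DERIV_isCont by (metis atLeastAtMost_iff le_less_trans)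
    then show "continuous_on {y..x} mills_gap" by (simp add: continuous_at_imp_continuous_on)
  qed
  show "\<forall>\<^sub>F y in at_bot. mills_gap y \<le> mills_gap x"
    using eventually_gt_at_bot[of x] by eventually_elim (rule increasing)
qed simp

lemma mills_bound: "x < 0 \<Longrightarrow> x * (1 - Qfun x) / phi x \<ge> -1"
  using mills_gap_nonneg[of x] phi_pos[of x] unfolding mills_gap_def by (simp add: field_simps)

section \<open>The fixed-point map\<close>

text \<open>h(x) = x + (1 - Q x)/phi(x); at x = Q^-1(e) it is the denominator of the fixed-point
  equation.  It is a strictly increasing bijection of the reals.\<close>
definition fixpt_map :: "real \<Rightarrow> real" where
  "fixpt_map x = x + (1 - Qfun x) / phi x"

lemma fixpt_map_deriv: "DERIV fixpt_map x :> 2 + x * (1 - Qfun x) / phi x"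
proof -
  let ?d = "1 + ((0 - (- phi x)) * phi x - (1 - Qfun x) * (- x * phi x)) / (phi x * phi x)"
  have "DERIV fixpt_map x :> ?d"
    unfolding fixpt_map_def[abs_def]
    by (rule DERIV_add[OF DERIV_ident DERIV_divide[OF DERIV_diff[OF DERIV_const Qfun_deriv] phi_deriv]])
       (use phi_pos[of x] in simp)
  moreover have "?d = 2 + x * (1 - Qfun x) / phi x"
    using phi_pos[of x] by (simp add: field_simps power2_eq_square)
  ultimately show ?thesis by simp
qed

text \<open>Positivity of h': from the Mills bound for x < 0, trivially for x >= 0.\<close>
lemma fixpt_map_deriv_pos: "2 + x * (1 - Qfun x) / phi x > 0"
proof (cases "x < 0")
  case True then show ?thesis using mills_bound[of x] by simp
next
  case False
  then have "0 \<le> x * (1 - Qfun x) / phi x"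
    using Qfun_bounds(2)[of x] phi_pos[of x] by (intro divide_nonneg_pos mult_nonneg_nonneg) auto
  then show ?thesis by linarith
qed

lemma fixpt_map_strict_mono: "a < b \<Longrightarrow> fixpt_map a < fixpt_map b"
  by (rule DERIV_pos_imp_increasing[of a b fixpt_map]) (use fixpt_map_deriv fixpt_map_deriv_pos in blast)+

lemma fixpt_map_less_iff: "fixpt_map a < fixpt_map b \<longleftrightarrow> a < b"
  using fixpt_map_strict_mono[of a b] fixpt_map_strict_mono[of b a]
  by (cases a b rule: linorder_cases) auto

lemma fixpt_map_eq_iff: "fixpt_map a = fixpt_map b \<longleftrightarrow> a = b"
  using fixpt_map_strict_mono[of a b] fixpt_map_strict_mono[of b a]
  by (cases a b rule: linorder_cases) auto

text \<open>Surjectivity: x < h(x) always, and h(x) <= x + 1 for x <= -1 by the Mills bound.\<close>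
lemma fixpt_map_surj: "\<exists>x. fixpt_map x = c"
proof -
  define a where "a = min (-1) (c - 1)"
  have a: "a \<le> -1" "a \<le> c - 1" by (simp_all add: a_def)
  have "(1 - Qfun a) / phi a \<le> 1 / (- a)"
    using mills_bound[of a] phi_pos[of a] a(1) by (simp add: field_simps)
  also have "\<dots> \<le> 1" using divide_le_eq_1_pos[of "- a" 1] a(1) by linarith
  finally have "fixpt_map a \<le> c" using a(2) unfolding fixpt_map_def by simp
  moreover have "c < fixpt_map c"
    using Qfun_bounds(2)[of c] phi_pos[of c] unfolding fixpt_map_def by simp
  moreover have "\<forall>x. a \<le> x \<and> x \<le> c \<longrightarrow> isCont fixpt_map x"
    using DERIV_isCont[OF fixpt_map_deriv] by blast
  ultimately have "\<exists>x\<ge>a. x \<le> c \<and> fixpt_map x = c"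
    using a by (intro IVT) auto
  then show ?thesis by blast
qed

lemma fixpt_map_Qinv_deriv:
  assumes "0 < e" "e < 1" shows "Qinv e - (1 - e) * deriv Qinv e = fixpt_map (Qinv e)"
  unfolding deriv_Qinv[OF assms] fixpt_map_def using Qfun_Qinv[OF assms] by simp

lemma fixpt_map_Qinv_explicit:
  assumes "0 < e" "e < 1"
  shows "Qinv e + (1 - e) * sqrt (2 * pi) * exp ((Qinv e)\<^sup>2 / 2) = fixpt_map (Qinv e)"
proof -
  have "(1 - e) * sqrt (2 * pi) * exp ((Qinv e)\<^sup>2 / 2) = (1 - Qfun (Qinv e)) * (1 / phi (Qinv e))"
    unfolding inverse_phi using Qfun_Qinv[OF assms] by simp
  then show ?thesis unfolding fixpt_map_def by simp
qed

section \<open>The goodput in the coordinate x = Q^-1(e)\<close>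

definition goodput :: "real \<Rightarrow> real \<Rightarrow> real" where
  "goodput k x = (1 - k * x) * (1 - Qfun x)"

lemma f_kappa_goodput: "0 < e \<Longrightarrow> e < 1 \<Longrightarrow> f_kappa k e = goodput k (Qinv e)"
  unfolding f_kappa_def goodput_def using Qfun_Qinv by simp

text \<open>The sign of the derivative is the sign of 1/k - h(x).\<close>
lemma goodput_deriv: assumes "k > 0" shows "DERIV (goodput k) x :> k * phi x * (1 / k - fixpt_map x)"
proof -
  let ?d = "(0 - k * 1) * (1 - Qfun x) + (0 - - phi x) * (1 - k * x)"
  have "DERIV (goodput k) x :> ?d"
    unfolding goodput_def[abs_def]
    by (rule DERIV_mult[OF DERIV_diff[OF DERIV_const DERIV_cmult[OF DERIV_ident]]
                           DERIV_diff[OF DERIV_const Qfun_deriv]])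
  moreover have "?d = k * phi x * (1 / k - fixpt_map x)"
    using assms phi_pos[of x] unfolding fixpt_map_def by (simp add: field_simps)
  ultimately show ?thesis by simp
qed

lemma goodput_continuous_on: "k > 0 \<Longrightarrow> continuous_on S (goodput k)"
  by (intro continuous_at_imp_continuous_on ballI DERIV_isCont[OF goodput_deriv])

definition opt_point :: "real \<Rightarrow> real" where
  "opt_point k = (THE x. fixpt_map x = 1 / k)"

lemma fixpt_map_opt_point: "fixpt_map (opt_point k) = 1 / k"
proof -
  obtain x where x: "fixpt_map x = 1 / k" using fixpt_map_surj by blast
  have "opt_point k = x" unfolding opt_point_def
    by (rule the_equality) (use x fixpt_map_eq_iff in metis)+
  then show ?thesis using x by simp
qed

text \<open>g_k increases before x*(k) and decreases after it, so x*(k) is its strict global maximum.\<close>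
lemma goodput_strict_max:
  assumes k: "k > 0" and x: "x \<noteq> opt_point k"
  shows "goodput k x < goodput k (opt_point k)"
proof (cases "x < opt_point k")
  case True
  then show ?thesis
  proof (rule DERIV_pos_imp_increasing_open)
    fix z assume "x < z" "z < opt_point k"
    then have "fixpt_map z < 1 / k" using fixpt_map_opt_point fixpt_map_strict_mono by metis
    then show "\<exists>d. DERIV (goodput k) z :> d \<and> 0 < d" using goodput_deriv[OF k] k phi_pos[of z]
      by (intro exI[of _ "k * phi z * (1 / k - fixpt_map z)"]) auto
  qed (rule goodput_continuous_on[OF k])
next
  case False
  then have "opt_point k < x" using x by simp
  then show ?thesis
  proof (rule DERIV_neg_imp_decreasing_open)
    fix z assume "opt_point k < z" "z < x"
    then have "fixpt_map z > 1 / k" using fixpt_map_opt_point fixpt_map_strict_mono by metis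
    then show "\<exists>d. DERIV (goodput k) z :> d \<and> d < 0" using goodput_deriv[OF k] k phi_pos[of z]
      by (intro exI[of _ "k * phi z * (1 / k - fixpt_map z)"]) (auto simp: mult_pos_neg)
  qed (rule goodput_continuous_on[OF k])
qed

lemma unique_maximizer:
  assumes k: "0 < k" shows "(\<exists>!e. is_maximizer k e) \<and> eps_g k = Qfun (opt_point k)"
proof -
  let ?E = "Qfun (opt_point k)"
  have E: "0 < ?E" "?E < 1" using Qfun_bounds by auto
  have gmax: "goodput k y \<le> goodput k (opt_point k)" for y
    using goodput_strict_max[OF k, of y] by (cases "y = opt_point k") auto
  have max: "is_maximizer k ?E"
    unfolding is_maximizer_def using E gmax f_kappa_goodput by auto
  have uniq: "e = ?E" if "is_maximizer k e" for e
  proof -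
    from that have e: "0 < e" "e < 1" and "f_kappa k ?E \<le> f_kappa k e"
      unfolding is_maximizer_def using E by auto
    then have "\<not> goodput k (Qinv e) < goodput k (opt_point k)" using f_kappa_goodput E by auto
    then have "Qinv e = opt_point k" using goodput_strict_max[OF k] by blast
    then show ?thesis using Qfun_Qinv[OF e] by simp
  qed
  have ex1: "\<exists>!e. is_maximizer k e" using max uniq by blast
  moreover have "eps_g k = ?E" unfolding eps_g_def by (rule the1_equality[OF ex1 max])
  ultimately show ?thesis ..
qed

lemma eps_g_bounds: "0 < k \<Longrightarrow> eps_g k \<in> {0<..<1}"
  using unique_maximizer Qfun_bounds by simp

lemma fixpt_map_Qinv_iff:
  assumes k: "0 < k" and e: "0 < e" "e < 1"
  shows "1 / fixpt_map (Qinv e) = k \<longleftrightarrow> e = eps_g k"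
proof -
  have "1 / fixpt_map (Qinv e) = k \<longleftrightarrow> fixpt_map (Qinv e) = fixpt_map (opt_point k)"
    unfolding fixpt_map_opt_point by (metis inverse_eq_divide inverse_inverse_eq)
  also have "\<dots> \<longleftrightarrow> e = Qfun (opt_point k)"
    using fixpt_map_eq_iff Qfun_Qinv[OF e] by auto
  finally show ?thesis using unique_maximizer[OF k] by simp
qed

text \<open>Monotonicity: 1/k decreases, hence so does x*(k), and Q reverses the order once more.\<close>
lemma eps_g_strict_mono: "strict_mono_on {0<..} eps_g"
proof (rule strict_mono_onI)
  fix r s :: real assume r: "r \<in> {0<..}" and s: "s \<in> {0<..}" and "r < s"
  then have "fixpt_map (opt_point s) < fixpt_map (opt_point r)"
    by (simp add: fixpt_map_opt_point frac_less2)
  then have "Qfun (opt_point r) < Qfun (opt_point s)"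
    by (simp add: fixpt_map_less_iff Qfun_strict_decreasing)
  then show "eps_g r < eps_g s" using unique_maximizer r s by simp
qed

theorem proposition1:
  shows "(\<forall>\<kappa>\<in>{0<..<1::real}.
           (\<exists>!e. is_maximizer \<kappa> e)
         \<and> eps_g \<kappa> \<in> {0<..<1}
         \<and> (\<forall>e\<in>{0<..<1::real}.
               1 / (Qinv e - (1 - e) * deriv Qinv e) = \<kappa> \<longleftrightarrow> e = eps_g \<kappa>)
         \<and> (\<forall>e\<in>{0<..<1::real}.
               1 / (Qinv e + (1 - e) * sqrt (2 * pi) * exp ((Qinv e)\<^sup>2 / 2)) = \<kappa>
                 \<longleftrightarrow> e = eps_g \<kappa>))
         \<and> strict_mono_on {0<..<1::real} eps_g"
proof (intro conjI ballI)
  fix k e :: real assume "k \<in> {0<..<1}" and "e \<in> {0<..<1}"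
  then have k: "0 < k" and e: "0 < e" "e < 1" by auto
  show "1 / (Qinv e - (1 - e) * deriv Qinv e) = k \<longleftrightarrow> e = eps_g k"
    unfolding fixpt_map_Qinv_deriv[OF e] by (rule fixpt_map_Qinv_iff[OF k e])
  show "1 / (Qinv e + (1 - e) * sqrt (2 * pi) * exp ((Qinv e)\<^sup>2 / 2)) = k \<longleftrightarrow> e = eps_g k"
    unfolding fixpt_map_Qinv_explicit[OF e] by (rule fixpt_map_Qinv_iff[OF k e])
next
  fix k :: real assume "k \<in> {0<..<1}"
  then show "\<exists>!e. is_maximizer k e" and "eps_g k \<in> {0<..<1}"
    using unique_maximizer eps_g_bounds by auto
next
  show "strict_mono_on {0<..<1::real} eps_g"
    using eps_g_strict_mono by (rule monotone_on_subset) auto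
qed

end
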